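(* Let $n>3$ and consider the complex Poisson algebras with basis $e_1,\dots,e_n$ in which $e_i\cdot e_j=e_{i+j}$ for $2\le i+j\le n-1$, with the listed further nonzero products (up to commutativity/anticommutativity): $\mathcal{P}_{1,1}^n$: none; $\mathcal{P}_{1,2}^n$: $\{e_1,e_n\}=e_n$; $\mathcal{P}_{1,3}^n$: $\{e_1,e_n\}=e_{n-1}$; $\mathcal{P}_{1,4}^n$: $e_n\cdot e_n=e_{n-1}$; $\mathcal{P}_{1,5}^n$: $e_n\cdot e_n=e_{n-1}$, $\{e_1,e_n\}=e_{n-1}$. Let $\varphi$ be a derivation of $\mathcal{P}$. Then, for $2\le i\le n-1$: (a) if $\mathcal{P}=\mathcal{P}_{1,1}^n$: $\varphi(e_1)=\sum_{k=1}^n\lambda_{k,1}e_k$, $\varphi(e_i)=\sum_{k=i}^{n-1}i\lambda_{k-i+1,1}e_k$, $\varphi(e_n)=\lambda_{n-1,n}e_{n-1}+\lambda_{n,n}e_n$ for some $\lambda_{k,1},\lambda_{n-1,n},\lambda_{n,n}\in\mathbb{C}$, and $\dim\mathfrak{Der}(\mathcal{P}_{1,1}^n)=n+2$; (b) if $\mathcal{P}=\mathcal{P}_{1,2}^n$: $\varphi(e_1)=\sum_{k=2}^n\lambda_{k,1}e_k$, $\varphi(e_i)=\sum_{k=i+1}^{n-1}i\lambda_{k-i+1,1}e_k$, $\varphi(e_n)=\lambda_{n,n}e_n$ for some $\lambda_{k,1},\lambda_{n,n}\in\mathbb{C}$, and $\dim\mathfrak{Der}(\mathcal{P}_{1,2}^n)=n$;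 (c) if $\mathcal{P}=\mathcal{P}_{1,3}^n$: $\varphi(e_1)=\sum_{k=1}^n\lambda_{k,1}e_k$, $\varphi(e_i)=\sum_{k=i}^{n-1}i\lambda_{k-i+1,1}e_k$, $\varphi(e_n)=\lambda_{n-1,n}e_{n-1}+(n-2)\lambda_{1,1}e_n$ for some $\lambda_{k,1},\lambda_{n-1,n}\in\mathbb{C}$, and $\dim\mathfrak{Der}(\mathcal{P}_{1,3}^n)=n+1$; (d) if $\mathcal{P}=\mathcal{P}_{1,4}^n$: $\varphi(e_1)=\sum_{k=1}^n\lambda_{k,1}e_k$, $\varphi(e_i)=\sum_{k=i}^{n-1}i\lambda_{k-i+1,1}e_k$, $\varphi(e_n)=-\lambda_{n,1}e_{n-2}+\lambda_{n-1,n}e_{n-1}+\frac{n-1}{2}\lambda_{1,1}e_n$ for some $\lambda_{k,1},\lambda_{n-1,n}\in\mathbb{C}$, and $\dim\mathfrak{Der}(\mathcal{P}_{1,4}^n)=n+1$; (e) if $\mathcal{P}=\mathcal{P}_{1,5}^n$: $\varphi(e_1)=\sum_{k=2}^n\lambda_{k,1}e_k$, $\varphi(e_i)=\sum_{k=i+1}^{n-1}i\lambda_{k-i+1,1}e_k$, $\varphi(e_n)=-\lambda_{n,1}e_{n-2}+\lambda_{n-1,n}e_{n-1}$ for some $\lambda_{k,1},\lambda_{n-1,n}\in\mathbb{C}$, and $\dim\mathfrak{Der}(\mathcal{P}_{1,5}^n)=n$.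
   Context: A derivation of a Poisson algebra $(\mathcal{P},\cdot,\{-,-\})$ is a linear map $\varphi$ with $\varphi(x\cdot y)=\varphi(x)\cdot y+x\cdot\varphi(y)$ and $\varphi(\{x,y\})=\{\varphi(x),y\}+\{x,\varphi(y)\}$ for all $x,y$; $\mathfrak{Der}(\mathcal{P})$ is the Lie algebra of derivations. Indices $k$ in $\lambda_{k,1}$ range over the values appearing in the sums. *)

theory Defs
  imports Complex_Main "HOL-Library.Function_Algebras"
begin

text \<open>Elements of the n-dimensional algebra with basis e_1..e_n are coordinate
functions nat => complex supported in {1..n}.\<close>

definition V :: "nat \<Rightarrow> (nat \<Rightarrow> complex) set" where
  "V n = {x. \<forall>k. k \<notin> {1..n} \<longrightarrow> x k = 0}"

definition ebas :: "nat \<Rightarrow> nat \<Rightarrow> complex" where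
  "ebas i = (\<lambda>k. if k = i then 1 else 0)"

text \<open>Structure constants: mu n t i j k is the coefficient of e_k in e_i . e_j,
br n t i j k the coefficient of e_k in {e_i,e_j}, for the algebra P_{1,t}^n (t = 1..5).\<close>

definition mu :: "nat \<Rightarrow> nat \<Rightarrow> nat \<Rightarrow> nat \<Rightarrow> nat \<Rightarrow> complex" where
  "mu n t i j k =
     (if 1 \<le> i \<and> 1 \<le> j \<and> 2 \<le> i + j \<and> i + j \<le> n - 1 \<and> k = i + j then 1 else 0)
   + (if t \<in> {4, 5} \<and> i = n \<and> j = n \<and> k = n - 1 then 1 else 0)"

definition br :: "nat \<Rightarrow> nat \<Rightarrow> nat \<Rightarrow> nat \<Rightarrow> nat \<Rightarrow> complex" where
  "br n t i j k =
     (if t = 2 \<and> k = n then (if i = 1 \<and> j = n then 1 else if i = n \<and> j = 1 then -1 else 0)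
      else if t \<in> {3, 5} \<and> k = n - 1 then
        (if i = 1 \<and> j = n then 1 else if i = n \<and> j = 1 then -1 else 0)
      else 0)"

definition pmul :: "nat \<Rightarrow> nat \<Rightarrow> (nat \<Rightarrow> complex) \<Rightarrow> (nat \<Rightarrow> complex) \<Rightarrow> nat \<Rightarrow> complex" where
  "pmul n t x y = (\<lambda>k. \<Sum>i\<in>{1..n}. \<Sum>j\<in>{1..n}. x i * y j * mu n t i j k)"

definition pbr :: "nat \<Rightarrow> nat \<Rightarrow> (nat \<Rightarrow> complex) \<Rightarrow> (nat \<Rightarrow> complex) \<Rightarrow> nat \<Rightarrow> complex" where
  "pbr n t x y = (\<lambda>k. \<Sum>i\<in>{1..n}. \<Sum>j\<in>{1..n}. x i * y j * br n t i j k)"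

text \<open>Derivations of P_{1,t}^n: linear maps V n -> V n (extended by 0 outside V n,
so that they form a vector space of functions) satisfying both Leibniz rules.\<close>

definition is_der :: "nat \<Rightarrow> nat \<Rightarrow> ((nat \<Rightarrow> complex) \<Rightarrow> (nat \<Rightarrow> complex)) \<Rightarrow> bool" where
  "is_der n t \<phi> \<longleftrightarrow>
     (\<forall>x. x \<notin> V n \<longrightarrow> \<phi> x = 0) \<and>
     (\<forall>x\<in>V n. \<phi> x \<in> V n) \<and>
     (\<forall>x\<in>V n. \<forall>y\<in>V n. \<phi> (x + y) = \<phi> x + \<phi> y) \<and>
     (\<forall>c. \<forall>x\<in>V n. \<phi> (\<lambda>k. c * x k) = (\<lambda>k. c * \<phi> x k)) \<and>
     (\<forall>x\<in>V n. \<forall>y\<in>V n. \<phi> (pmul n t x y) = pmul n t (\<phi> x) y + pmul n t x (\<phi> y)) \<and>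
     (\<forall>x\<in>V n. \<forall>y\<in>V n. \<phi> (pbr n t x y) = pbr n t (\<phi> x) y + pbr n t x (\<phi> y))"

definition Der :: "nat \<Rightarrow> nat \<Rightarrow> ((nat \<Rightarrow> complex) \<Rightarrow> (nat \<Rightarrow> complex)) set" where
  "Der n t = {\<phi>. is_der n t \<phi>}"

definition dscale :: "complex \<Rightarrow> ((nat \<Rightarrow> complex) \<Rightarrow> (nat \<Rightarrow> complex))
                     \<Rightarrow> ((nat \<Rightarrow> complex) \<Rightarrow> (nat \<Rightarrow> complex))" where
  "dscale c \<phi> = (\<lambda>x k. c * \<phi> x k)"

lemma vector_space_dscale: "vector_space dscale"
  by unfold_locales (auto simp: dscale_def fun_eq_iff algebra_simps)

definition dimDer :: "nat \<Rightarrow> nat \<Rightarrow> nat" where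
  "dimDer n t = vector_space.dim dscale (Der n t)"

end

theory Submission
  imports Defs
begin

text \<open>A linear endomorphism of span(e_1, ..., e_n) is determined by its matrix, and it satisfies
  the Leibniz rule for a bilinear product iff it does so on pairs of basis vectors, i.e. iff its
  matrix solves a finite linear system. For P_{1,t}^n this system is solved explicitly: the pairs
  (e_1, e_(i-1)) make row i equal to i times the first row shifted by i - 1 (2 <= i <= n - 1);
  the pair (e_1, e_n) fixes the last row in columns 1, ..., n - 2; the pair (e_n, e_n) and the
  bracket {e_1, e_n}, where nonzero, tie the (n, n) entry to the (1, 1) entry. What remains free
  is the first row and the entries (n, n - 1), (n, n), minus those the case forces to vanish.
  These parameters describe the derivations linearly and injectively, so their number is the
  dimension.\<close>

lemma sum_fun_apply: "(\<Sum>i\<in>A. f i) x = (\<Sum>i\<in>A. f i x)"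
  by (induction A rule: infinite_finite_induct) auto

lemma sum_if_conj: "finite S \<Longrightarrow> (\<Sum>k\<in>S. if P \<and> k = a then f k else 0) = (if P \<and> a \<in> S then f a else 0)"
  by (cases P) auto

lemma sum_rotate3: "(\<Sum>a\<in>A. \<Sum>b\<in>B. \<Sum>c\<in>C. f a b c) = (\<Sum>b\<in>B. \<Sum>c\<in>C. \<Sum>a\<in>A. f a b c)"
  by (rule trans[OF sum.swap], rule sum.cong, rule refl, rule sum.swap)

lemma sum_reverse3: "(\<Sum>a\<in>A. \<Sum>b\<in>B. \<Sum>c\<in>C. f a b c) = (\<Sum>c\<in>C. \<Sum>b\<in>B. \<Sum>a\<in>A. f a b c)"
  by (rule trans[OF sum_rotate3], rule sum.swap)

lemma sum_ebas_mult:
  assumes "finite A"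
  shows "(\<Sum>k\<in>A. ebas i k * g k) = (if i \<in> A then g i else 0)"
proof -
  have "(\<Sum>k\<in>A. ebas i k * g k) = (\<Sum>k\<in>A. if i = k then g k else 0)"
    by (rule sum.cong) (auto simp: ebas_def)
  with assms show ?thesis by (simp add: sum.delta')
qed

lemma sum_mult_ebas: "finite A \<Longrightarrow> (\<Sum>k\<in>A. g k * ebas k i) = (if i \<in> A then g i else 0)"
  using sum_ebas_mult[of A i g] by (simp add: ebas_def mult.commute eq_commute)

lemma ebas_in_V: "i \<in> {1..n} \<Longrightarrow> ebas i \<in> V n"
  by (auto simp: V_def ebas_def)

lemma V_eq_sum_ebas: "x \<in> V n \<Longrightarrow> x = (\<lambda>k. \<Sum>i\<in>{1..n}. x i * ebas i k)"
  by (auto simp: V_def sum_mult_ebas)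

section \<open>Linear maps of V n and their matrices\<close>

definition linear_on_V :: "nat \<Rightarrow> ((nat \<Rightarrow> complex) \<Rightarrow> nat \<Rightarrow> complex) \<Rightarrow> bool" where
  "linear_on_V n \<phi> \<longleftrightarrow>
     (\<forall>x\<in>V n. \<forall>y\<in>V n. \<phi> (x + y) = \<phi> x + \<phi> y) \<and>
     (\<forall>c. \<forall>x\<in>V n. \<phi> (\<lambda>k. c * x k) = (\<lambda>k. c * \<phi> x k))"

lemma is_der_linear_on_V: "is_der n t \<phi> \<Longrightarrow> linear_on_V n \<phi>"
  by (simp add: is_der_def linear_on_V_def)

lemma linear_on_V_expand:
  assumes lin: "linear_on_V n \<phi>" and x: "x \<in> V n"
  shows "\<phi> x = (\<lambda>j. \<Sum>i\<in>{1..n}. x i * \<phi> (ebas i) j)"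
proof -
  have "\<phi> (\<lambda>k. \<Sum>i\<in>A. x i * ebas i k) = (\<lambda>j. \<Sum>i\<in>A. x i * \<phi> (ebas i) j)"
    if "A \<subseteq> {1..n}" for A
    using finite_subset[OF that finite_atLeastAtMost] that
  proof (induction A rule: finite_induct)
    case empty
    have "(0 :: nat \<Rightarrow> complex) \<in> V n" by (simp add: V_def)
    then have "\<phi> (\<lambda>k. 0 * 0) = (\<lambda>k. 0 * \<phi> 0 k)"
      using lin unfolding linear_on_V_def by fastforce
    then show ?case by simp
  next
    case (insert a A)
    have a: "(\<lambda>k. x a * ebas a k) \<in> V n" and A: "(\<lambda>k. \<Sum>i\<in>A. x i * ebas i k) \<in> V n"
      using insert.prems by (auto simp: V_def ebas_def sum_mult_ebas[OF insert.hyps(1)] intro!: sum.neutral)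
    have "(\<lambda>k. \<Sum>i\<in>insert a A. x i * ebas i k) = (\<lambda>k. x a * ebas a k) + (\<lambda>k. \<Sum>i\<in>A. x i * ebas i k)"
      using insert.hyps by (simp add: fun_eq_iff)
    then have "\<phi> (\<lambda>k. \<Sum>i\<in>insert a A. x i * ebas i k) = (\<lambda>k. x a * \<phi> (ebas a) k) + \<phi> (\<lambda>k. \<Sum>i\<in>A. x i * ebas i k)"
      using lin a A ebas_in_V[of a n] insert.prems unfolding linear_on_V_def by auto
    then show ?case
      using insert by (simp add: fun_eq_iff)
  qed
  from this[of "{1..n}"] show ?thesis
    using V_eq_sum_ebas[OF x] by simp
qed

definition mat_map :: "nat \<Rightarrow> (nat \<Rightarrow> nat \<Rightarrow> complex) \<Rightarrow> (nat \<Rightarrow> complex) \<Rightarrow> nat \<Rightarrow> complex" where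
  "mat_map n M x = (if x \<in> V n then (\<lambda>j. \<Sum>i\<in>{1..n}. x i * M i j) else 0)"

lemma mat_map_ebas: "i \<in> {1..n} \<Longrightarrow> mat_map n M (ebas i) = M i"
  by (simp add: mat_map_def ebas_in_V sum_ebas_mult fun_eq_iff)

lemma mat_map_cong: "(\<And>i. i \<in> {1..n} \<Longrightarrow> M i = M' i) \<Longrightarrow> mat_map n M = mat_map n M'"
  by (simp add: mat_map_def fun_eq_iff)

lemma linear_on_V_eq_mat_map:
  assumes "linear_on_V n \<phi>" and "\<And>x. x \<notin> V n \<Longrightarrow> \<phi> x = 0"
  shows "\<phi> = mat_map n (\<lambda>i. \<phi> (ebas i))"
  using assms linear_on_V_expand[OF assms(1)] by (auto simp: mat_map_def)

lemma mat_map_linear_on_V: "linear_on_V n (mat_map n M)"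
proof -
  have "x + y \<in> V n" "(\<lambda>k. c * x k) \<in> V n" if "x \<in> V n" "y \<in> V n" for x y :: "nat \<Rightarrow> complex" and c
    using that by (auto simp: V_def)
  then show ?thesis
    by (auto simp: linear_on_V_def mat_map_def fun_eq_iff distrib_right sum.distrib
        sum_distrib_left mult.assoc)
qed

lemma mat_map_sum:
  "mat_map n (\<lambda>i j. \<Sum>k\<in>A. q k * M k i j) = (\<Sum>k\<in>A. dscale (q k) (mat_map n (M k)))"
  by (auto simp: mat_map_def fun_eq_iff sum_fun_apply dscale_def sum_distrib_left
      intro: sum.swap[THEN trans] sum.cong simp: mult_ac)

section \<open>Derivations of products given by structure constants\<close>

definition bilin :: "nat \<Rightarrow> (nat \<Rightarrow> nat \<Rightarrow> nat \<Rightarrow> complex)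
                     \<Rightarrow> (nat \<Rightarrow> complex) \<Rightarrow> (nat \<Rightarrow> complex) \<Rightarrow> nat \<Rightarrow> complex" where
  "bilin n c x y = (\<lambda>k. \<Sum>i\<in>{1..n}. \<Sum>j\<in>{1..n}. x i * y j * c i j k)"

lemma pmul_eq_bilin: "pmul n t = bilin n (mu n t)"
  by (simp add: fun_eq_iff pmul_def bilin_def)

lemma pbr_eq_bilin: "pbr n t = bilin n (br n t)"
  by (simp add: fun_eq_iff pbr_def bilin_def)

lemma bilin_in_V: "(\<And>i l k. k \<notin> {1..n} \<Longrightarrow> c i l k = 0) \<Longrightarrow> bilin n c x y \<in> V n"
  by (auto simp: V_def bilin_def)

lemma bilin_ebas_left: "i \<in> {1..n} \<Longrightarrow> bilin n c (ebas i) y = (\<lambda>k. \<Sum>b\<in>{1..n}. y b * c i b k)"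
  by (simp add: bilin_def mult.assoc sum_ebas_mult sum_distrib_left[symmetric])

lemma bilin_ebas_right: "l \<in> {1..n} \<Longrightarrow> bilin n c x (ebas l) = (\<lambda>k. \<Sum>a\<in>{1..n}. x a * c a l k)"
  by (simp add: bilin_def mult.assoc mult.left_commute[of "ebas l _"] sum_distrib_left[symmetric]
      sum_ebas_mult)

lemma bilin_ebas: "i \<in> {1..n} \<Longrightarrow> l \<in> {1..n} \<Longrightarrow> bilin n c (ebas i) (ebas l) = c i l"
  by (simp add: bilin_ebas_left sum_ebas_mult fun_eq_iff)

text \<open>The Leibniz rule for the product with structure constants c, applied to (e_i, e_l)
  and read off at e_j.\<close>

definition leibniz_mat :: "nat \<Rightarrow> (nat \<Rightarrow> nat \<Rightarrow> nat \<Rightarrow> complex) \<Rightarrow> (nat \<Rightarrow> nat \<Rightarrow> complex) \<Rightarrow> bool" where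
  "leibniz_mat n c M \<longleftrightarrow> (\<forall>i\<in>{1..n}. \<forall>l\<in>{1..n}. \<forall>j.
     (\<Sum>k\<in>{1..n}. c i l k * M k j) = (\<Sum>a\<in>{1..n}. M i a * c a l j) + (\<Sum>b\<in>{1..n}. M l b * c i b j))"

lemma leibniz_mat_of_derivation:
  assumes lin: "linear_on_V n \<phi>"
    and leib: "\<And>x y. x \<in> V n \<Longrightarrow> y \<in> V n \<Longrightarrow> \<phi> (bilin n c x y) = bilin n c (\<phi> x) y + bilin n c x (\<phi> y)"
    and c: "\<And>i l k. k \<notin> {1..n} \<Longrightarrow> c i l k = 0"
  shows "leibniz_mat n c (\<lambda>i. \<phi> (ebas i))"
  unfolding leibniz_mat_def
proof (intro ballI allI)
  fix i l j assume i: "i \<in> {1..n}" and l: "l \<in> {1..n}"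
  have "c i l \<in> V n" using c by (auto simp: V_def)
  then have "(\<Sum>k\<in>{1..n}. c i l k * \<phi> (ebas k) j) = \<phi> (bilin n c (ebas i) (ebas l)) j"
    using linear_on_V_expand[OF lin] by (simp add: bilin_ebas[OF i l])
  also have "\<dots> = (\<Sum>a\<in>{1..n}. \<phi> (ebas i) a * c a l j) + (\<Sum>b\<in>{1..n}. \<phi> (ebas l) b * c i b j)"
    using leib[OF ebas_in_V[OF i] ebas_in_V[OF l]] by (simp add: bilin_ebas_left[OF i] bilin_ebas_right[OF l])
  finally show "(\<Sum>k\<in>{1..n}. c i l k * \<phi> (ebas k) j) =
      (\<Sum>a\<in>{1..n}. \<phi> (ebas i) a * c a l j) + (\<Sum>b\<in>{1..n}. \<phi> (ebas l) b * c i b j)" .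
qed

lemma mat_map_derivation:
  assumes c: "\<And>i l k. k \<notin> {1..n} \<Longrightarrow> c i l k = 0"
    and M: "leibniz_mat n c M" and x: "x \<in> V n" and y: "y \<in> V n"
  shows "mat_map n M (bilin n c x y) = bilin n c (mat_map n M x) y + bilin n c x (mat_map n M y)"
proof
  fix j
  let ?I = "{1..n}"
  have "mat_map n M (bilin n c x y) j = (\<Sum>k\<in>?I. \<Sum>i\<in>?I. \<Sum>l\<in>?I. x i * y l * c i l k * M k j)"
    using bilin_in_V[OF c] by (simp add: mat_map_def bilin_def sum_distrib_right)
  also have "\<dots> = (\<Sum>i\<in>?I. \<Sum>l\<in>?I. \<Sum>k\<in>?I. x i * y l * c i l k * M k j)"
    by (rule sum_rotate3)
  also have "\<dots> = (\<Sum>i\<in>?I. \<Sum>l\<in>?I. x i * y l * (\<Sum>k\<in>?I. c i l k * M k j))"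
    by (simp add: sum_distrib_left mult.assoc)
  also have "\<dots> = (\<Sum>i\<in>?I. \<Sum>l\<in>?I. x i * y l * (\<Sum>a\<in>?I. M i a * c a l j))
                + (\<Sum>i\<in>?I. \<Sum>l\<in>?I. x i * y l * (\<Sum>b\<in>?I. M l b * c i b j))"
    using M by (simp add: leibniz_mat_def sum.distrib distrib_left)
  also have "(\<Sum>i\<in>?I. \<Sum>l\<in>?I. x i * y l * (\<Sum>a\<in>?I. M i a * c a l j)) = bilin n c (mat_map n M x) y j"
  proof -
    have "bilin n c (mat_map n M x) y j = (\<Sum>a\<in>?I. \<Sum>l\<in>?I. \<Sum>i\<in>?I. x i * y l * (M i a * c a l j))"
      using x by (simp add: mat_map_def bilin_def sum_distrib_right sum_distrib_left mult_ac)
    also have "\<dots> = (\<Sum>i\<in>?I. \<Sum>l\<in>?I. \<Sum>a\<in>?I. x i * y l * (M i a * c a l j))"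
      by (rule sum_reverse3)
    finally show ?thesis
      by (simp add: sum_distrib_left)
  qed
  also have "(\<Sum>i\<in>?I. \<Sum>l\<in>?I. x i * y l * (\<Sum>b\<in>?I. M l b * c i b j)) = bilin n c x (mat_map n M y) j"
  proof -
    have "bilin n c x (mat_map n M y) j = (\<Sum>i\<in>?I. \<Sum>b\<in>?I. \<Sum>l\<in>?I. x i * y l * (M l b * c i b j))"
      using y by (simp add: mat_map_def bilin_def sum_distrib_right sum_distrib_left mult_ac)
    also have "\<dots> = (\<Sum>i\<in>?I. \<Sum>l\<in>?I. \<Sum>b\<in>?I. x i * y l * (M l b * c i b j))"
      by (rule sum.cong[OF refl sum.swap])
    finally show ?thesis
      by (simp add: sum_distrib_left)
  qed
  finally show "mat_map n M (bilin n c x y) j = (bilin n c (mat_map n M x) y + bilin n c x (mat_map n M y)) j"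
    by simp
qed

lemma mu_vanish: "2 \<le> n \<Longrightarrow> k \<notin> {1..n} \<Longrightarrow> mu n t i l k = 0"
  by (auto simp: mu_def)

lemma br_vanish: "2 \<le> n \<Longrightarrow> k \<notin> {1..n} \<Longrightarrow> br n t i l k = 0"
  by (auto simp: br_def)

lemma is_der_leibniz_mat:
  assumes "is_der n t \<phi>" "2 \<le> n"
  shows "leibniz_mat n (mu n t) (\<lambda>i. \<phi> (ebas i))" "leibniz_mat n (br n t) (\<lambda>i. \<phi> (ebas i))"
  using assms is_der_linear_on_V
  by (auto intro!: leibniz_mat_of_derivation mu_vanish br_vanish
      simp: is_der_def pmul_eq_bilin pbr_eq_bilin)

lemma leibniz_mat_is_der:
  assumes n: "2 \<le> n" and cols: "\<And>i j. i \<in> {1..n} \<Longrightarrow> j \<notin> {1..n} \<Longrightarrow> M i j = 0"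
    and M_mu: "leibniz_mat n (mu n t) M" and M_br: "leibniz_mat n (br n t) M"
  shows "is_der n t (mat_map n M)"
proof -
  have "mat_map n M x \<in> V n" for x
    using cols by (auto simp: mat_map_def V_def)
  moreover have "mat_map n M x = 0" if "x \<notin> V n" for x
    using that by (simp add: mat_map_def)
  ultimately show ?thesis
    using mat_map_linear_on_V[of n M]
      mat_map_derivation[OF mu_vanish[OF n] M_mu] mat_map_derivation[OF br_vanish[OF n] M_br]
    by (simp add: is_der_def linear_on_V_def pmul_eq_bilin pbr_eq_bilin)
qed

section \<open>The Leibniz equations of P_{1,t}^n\<close>

text \<open>For t = 2, 3, 5 the bracket {e_1, e_n} is e_k with k = br_target n t.\<close>

definition br_target :: "nat \<Rightarrow> nat \<Rightarrow> nat" where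
  "br_target n t = (if t = 2 then n else n - 1)"

text \<open>The equations of leibniz_mat for mu n t and br n t, with the sums over the structure
  constants evaluated.\<close>

definition mu_eq :: "nat \<Rightarrow> nat \<Rightarrow> (nat \<Rightarrow> nat \<Rightarrow> complex) \<Rightarrow> nat \<Rightarrow> nat \<Rightarrow> nat \<Rightarrow> bool" where
  "mu_eq n t M i l j \<longleftrightarrow>
     (if i + l \<le> n - 1 then M (i+l) j else 0) + (if t \<in> {4,5} \<and> i = n \<and> l = n then M (n-1) j else 0) =
     ((if l < j \<and> j \<le> n - 1 then M i (j - l) else 0) + (if t \<in> {4,5} \<and> l = n \<and> j = n - 1 then M i n else 0))
   + ((if i < j \<and> j \<le> n - 1 then M l (j - i) else 0) + (if t \<in> {4,5} \<and> i = n \<and> j = n - 1 then M l n else 0))"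

definition br_eq :: "nat \<Rightarrow> nat \<Rightarrow> (nat \<Rightarrow> nat \<Rightarrow> complex) \<Rightarrow> nat \<Rightarrow> nat \<Rightarrow> nat \<Rightarrow> bool" where
  "br_eq n t M i l j \<longleftrightarrow>
     (if t \<in> {2,3,5} then (if i = 1 \<and> l = n then M (br_target n t) j
                           else if i = n \<and> l = 1 then - M (br_target n t) j else 0) else 0) =
     (if t \<in> {2,3,5} \<and> j = br_target n t then (if l = n then M i 1 else if l = 1 then - M i n else 0) else 0)
   + (if t \<in> {2,3,5} \<and> j = br_target n t then (if i = 1 then M l n else if i = n then - M l 1 else 0) else 0)"

lemma mu_commute: "mu n t i l k = mu n t l i k"
  unfolding mu_def by (auto simp: add.commute)

lemma mu_eq_commute: "mu_eq n t M i l j \<longleftrightarrow> mu_eq n t M l i j"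
  unfolding mu_eq_def by (simp add: add.commute conj_commute)

context
  fixes n :: nat
  assumes n: "3 < n"
begin

lemma sum_mu_mult:
  assumes i: "i \<in> {1..n}" and l: "l \<in> {1..n}"
  shows "(\<Sum>k\<in>{1..n}. mu n t i l k * M k j) =
    (if i + l \<le> n - 1 then M (i+l) j else 0) + (if t \<in> {4,5} \<and> i = n \<and> l = n then M (n-1) j else 0)"
proof -
  have "(\<Sum>k\<in>{1..n}. mu n t i l k * M k j) =
     (\<Sum>k\<in>{1..n}. if (1 \<le> i \<and> 1 \<le> l \<and> 2 \<le> i + l \<and> i + l \<le> n - 1) \<and> k = i + l then M k j else 0)
   + (\<Sum>k\<in>{1..n}. if (t \<in> {4, 5} \<and> i = n \<and> l = n) \<and> k = n - 1 then M k j else 0)"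
    unfolding mu_def distrib_right sum.distrib
    by (rule arg_cong2[where f="(+)"]; rule sum.cong) auto
  also have "\<dots> = (if i + l \<le> n - 1 then M (i+l) j else 0) + (if t \<in> {4,5} \<and> i = n \<and> l = n then M (n-1) j else 0)"
    using n i l by (simp only: sum_if_conj[OF finite_atLeastAtMost]) auto
  finally show ?thesis .
qed

lemma sum_mult_mu_fst:
  assumes l: "l \<in> {1..n}"
  shows "(\<Sum>a\<in>{1..n}. M a * mu n t a l j) =
    (if l < j \<and> j \<le> n - 1 then M (j - l) else 0) + (if t \<in> {4,5} \<and> l = n \<and> j = n - 1 then M n else 0)"
proof -
  have "(\<Sum>a\<in>{1..n}. M a * mu n t a l j) =
     (\<Sum>a\<in>{1..n}. if (1 \<le> l \<and> l < j \<and> j \<le> n - 1) \<and> a = j - l then M a else 0)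
   + (\<Sum>a\<in>{1..n}. if (t \<in> {4, 5} \<and> l = n \<and> j = n - 1) \<and> a = n then M a else 0)"
    unfolding mu_def distrib_left sum.distrib
    by (rule arg_cong2[where f="(+)"]; rule sum.cong; simp) (use l in auto)
  also have "\<dots> = (if l < j \<and> j \<le> n - 1 then M (j - l) else 0) + (if t \<in> {4,5} \<and> l = n \<and> j = n - 1 then M n else 0)"
    using n l by (simp only: sum_if_conj[OF finite_atLeastAtMost]) auto
  finally show ?thesis .
qed

lemma sum_mult_mu_snd:
  assumes i: "i \<in> {1..n}"
  shows "(\<Sum>b\<in>{1..n}. M b * mu n t i b j) =
    (if i < j \<and> j \<le> n - 1 then M (j - i) else 0) + (if t \<in> {4,5} \<and> i = n \<and> j = n - 1 then M n else 0)"
proof -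
  have "(\<Sum>b\<in>{1..n}. M b * mu n t i b j) = (\<Sum>b\<in>{1..n}. M b * mu n t b i j)"
    by (simp only: mu_commute[of n t i])
  then show ?thesis
    using sum_mult_mu_fst[OF i] by simp
qed

lemma br_via_target:
  "br n t i l k =
   (if t \<in> {2,3,5} \<and> k = br_target n t then (if i = 1 \<and> l = n then 1 else if i = n \<and> l = 1 then -1 else 0) else 0)"
  using n by (auto simp: br_def br_target_def)

lemma sum_br_mult:
  "(\<Sum>k\<in>{1..n}. br n t i l k * M k j) =
    (if t \<in> {2,3,5} then (if i = 1 \<and> l = n then M (br_target n t) j
                          else if i = n \<and> l = 1 then - M (br_target n t) j else 0) else 0)"
proof -
  have "(\<Sum>k\<in>{1..n}. br n t i l k * M k j) =
     (\<Sum>k\<in>{1..n}. if t \<in> {2,3,5} \<and> k = br_target n t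
        then (if i = 1 \<and> l = n then 1 else if i = n \<and> l = 1 then -1 else 0) * M k j else 0)"
    by (rule sum.cong) (auto simp: br_via_target)
  also have "\<dots> = (if t \<in> {2,3,5} then (if i = 1 \<and> l = n then M (br_target n t) j
                          else if i = n \<and> l = 1 then - M (br_target n t) j else 0) else 0)"
    using n by (simp only: sum_if_conj[OF finite_atLeastAtMost]) (auto simp: br_target_def)
  finally show ?thesis .
qed

lemma sum_mult_br_fst:
  "(\<Sum>a\<in>{1..n}. M a * br n t a l j) =
    (if t \<in> {2,3,5} \<and> j = br_target n t then (if l = n then M 1 else if l = 1 then - M n else 0) else 0)"
proof (cases "t \<in> {2,3,5} \<and> j = br_target n t")
  case True
  have "(\<Sum>a\<in>{1..n}. M a * br n t a l j) =
     (\<Sum>a\<in>{1..n}. (if l = n \<and> a = 1 then M a else 0) + (if l = 1 \<and> a = n then - M a else 0))"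
    by (rule sum.cong) (use n True in \<open>auto simp: br_via_target\<close>)
  also have "\<dots> = (if l = n then M 1 else if l = 1 then - M n else 0)"
    using n by (simp only: sum.distrib sum_if_conj[OF finite_atLeastAtMost]) auto
  finally show ?thesis using True by simp
qed (auto simp: br_via_target)

lemma sum_mult_br_snd:
  "(\<Sum>b\<in>{1..n}. M b * br n t i b j) =
    (if t \<in> {2,3,5} \<and> j = br_target n t then (if i = 1 then M n else if i = n then - M 1 else 0) else 0)"
proof (cases "t \<in> {2,3,5} \<and> j = br_target n t")
  case True
  have "(\<Sum>b\<in>{1..n}. M b * br n t i b j) =
     (\<Sum>b\<in>{1..n}. (if i = 1 \<and> b = n then M b else 0) + (if i = n \<and> b = 1 then - M b else 0))"
    by (rule sum.cong) (use n True in \<open>auto simp: br_via_target\<close>)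
  also have "\<dots> = (if i = 1 then M n else if i = n then - M 1 else 0)"
    using n by (simp only: sum.distrib sum_if_conj[OF finite_atLeastAtMost]) auto
  finally show ?thesis using True by simp
qed (auto simp: br_via_target)

lemma leibniz_mat_mu_iff:
  "leibniz_mat n (mu n t) M \<longleftrightarrow> (\<forall>i\<in>{1..n}. \<forall>l\<in>{1..n}. \<forall>j. mu_eq n t M i l j)"
proof -
  have "(\<Sum>k\<in>{1..n}. mu n t i l k * M k j) =
          (\<Sum>a\<in>{1..n}. M i a * mu n t a l j) + (\<Sum>b\<in>{1..n}. M l b * mu n t i b j)
        \<longleftrightarrow> mu_eq n t M i l j" if "i \<in> {1..n}" "l \<in> {1..n}" for i l j
    unfolding mu_eq_def using that by (simp only: sum_mu_mult sum_mult_mu_fst sum_mult_mu_snd)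
  then show ?thesis
    unfolding leibniz_mat_def by blast
qed

lemma leibniz_mat_br_iff:
  "leibniz_mat n (br n t) M \<longleftrightarrow> (\<forall>i\<in>{1..n}. \<forall>l\<in>{1..n}. \<forall>j. br_eq n t M i l j)"
  unfolding leibniz_mat_def br_eq_def by (simp only: sum_br_mult sum_mult_br_fst sum_mult_br_snd)

end

section \<open>Solving the Leibniz equations\<close>

text \<open>A derivation matrix is parametrised by p: p 1, ..., p n is its first row, p (n+1) and
  p (n+2) are its entries at (n, n-1) and (n, n); param_set n t collects the parameters that
  are free for P_{1,t}^n.\<close>

definition der_last_row :: "nat \<Rightarrow> nat \<Rightarrow> (nat \<Rightarrow> complex) \<Rightarrow> nat \<Rightarrow> complex" where
  "der_last_row n t p j =
      (if t = 1 then (if j = n - 1 then p (n+1) else if j = n then p (n+2) else 0)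
       else if t = 2 then (if j = n then p (n+2) else 0)
       else if t = 3 then (if j = n - 1 then p (n+1) else if j = n then of_nat (n - 2) * p 1 else 0)
       else if t = 4 then (if j = n - 2 then - p n else if j = n - 1 then p (n+1)
                           else if j = n then (of_nat n - 1) / 2 * p 1 else 0)
       else (if j = n - 2 then - p n else if j = n - 1 then p (n+1) else 0))"

definition der_mat :: "nat \<Rightarrow> nat \<Rightarrow> (nat \<Rightarrow> complex) \<Rightarrow> nat \<Rightarrow> nat \<Rightarrow> complex" where
  "der_mat n t p i j =
     (if i = 1 then (if 1 \<le> j \<and> j \<le> n then p j else 0)
      else if 2 \<le> i \<and> i \<le> n - 1 then (if i \<le> j \<and> j \<le> n - 1 then of_nat i * p (j - i + 1) else 0)
      else if i = n then der_last_row n t p j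
      else 0)"

definition param_set :: "nat \<Rightarrow> nat \<Rightarrow> nat set" where
  "param_set n t = (if t = 1 then {1..n+2} else if t = 2 then {2..n} \<union> {n+2}
      else if t \<in> {3,4} then {1..n+1} else {2..n+1})"

definition der_params :: "nat \<Rightarrow> nat \<Rightarrow> (nat \<Rightarrow> nat \<Rightarrow> complex) \<Rightarrow> nat \<Rightarrow> complex" where
  "der_params n t M m =
     (if m \<notin> param_set n t then 0 else if m \<le> n then M 1 m else if m = n + 1 then M n (n - 1) else M n n)"

lemma der_mat_row_1: "der_mat n t p 1 j = (if 1 \<le> j \<and> j \<le> n then p j else 0)"
  by (simp add: der_mat_def)

lemma der_mat_row_Suc_0: "der_mat n t p (Suc 0) j = (if 1 \<le> j \<and> j \<le> n then p j else 0)"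
  by (simp add: der_mat_def)

lemma der_mat_middle_row:
  "2 \<le> i \<Longrightarrow> i \<le> n - 1 \<Longrightarrow> der_mat n t p i j = (if i \<le> j \<and> j \<le> n - 1 then of_nat i * p (j - i + 1) else 0)"
  by (simp add: der_mat_def)

lemma finite_param_set: "finite (param_set n t)"
  by (simp add: param_set_def)

lemma one_notin_param_set: "t \<in> {2,5} \<Longrightarrow> 1 \<notin> param_set n t"
  by (auto simp: param_set_def)

context
  fixes n :: nat
  assumes n: "3 < n"
begin

lemma der_mat_last_row: "der_mat n t p n j = der_last_row n t p j"
proof -
  have "n \<noteq> 1" "\<not> n \<le> n - 1" using n by auto
  then show ?thesis by (simp add: der_mat_def)
qed

lemma der_last_row_outside: "j \<notin> {1..n} \<Longrightarrow> der_last_row n t p j = 0"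
  using n by (auto simp: der_last_row_def)

lemma der_mat_outside_cols:
  assumes "j \<notin> {1..n}"
  shows "der_mat n t p i j = 0"
  using assms der_last_row_outside[OF assms] by (auto simp: der_mat_def)

lemma der_last_row_low:
  assumes "1 \<le> m" "m \<le> n - 2" "t \<in> {1..5}"
  shows "der_last_row n t p m = (if t \<in> {4,5} \<and> m = n - 2 then - p n else 0)"
proof -
  have "m \<noteq> n - 1" "m \<noteq> n" "t = 1 \<or> t = 2 \<or> t = 3 \<or> t = 4 \<or> t = 5" using assms n by auto
  then show ?thesis unfolding der_last_row_def by auto
qed

lemma der_last_row_sub_diag: "der_last_row n t p (n - 1) = (if t = 2 then 0 else p (n+1))"
  using n by (auto simp: der_last_row_def)

lemma der_last_row_diag:
  "der_last_row n t p n = (if t = 1 \<or> t = 2 then p (n+2) else if t = 3 then of_nat (n - 2) * p 1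
     else if t = 4 then (of_nat n - 1) / 2 * p 1 else 0)"
  using n by (auto simp: der_last_row_def)

context
  fixes t :: nat and M :: "nat \<Rightarrow> nat \<Rightarrow> complex"
  assumes t: "t \<in> {1..5}"
    and mu: "\<And>i l j. i \<in> {1..n} \<Longrightarrow> l \<in> {1..n} \<Longrightarrow> mu_eq n t M i l j"
    and br: "\<And>i l j. i \<in> {1..n} \<Longrightarrow> l \<in> {1..n} \<Longrightarrow> br_eq n t M i l j"
    and cols: "\<And>i j. i \<in> {1..n} \<Longrightarrow> j \<notin> {1..n} \<Longrightarrow> M i j = 0"
begin

lemma solution_row_step:
  assumes i: "2 \<le> i" "i \<le> n - 1"
  shows "M i j = (if i - 1 < j \<and> j \<le> n - 1 then M 1 (j - (i - 1)) else 0)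
               + (if 1 < j \<and> j \<le> n - 1 then M (i - 1) (j - 1) else 0)"
proof -
  have "1 \<in> {1..n}" "i - 1 \<in> {1..n}" "i - 1 \<noteq> n" "i - Suc 0 \<noteq> n" using n i by auto
  then show ?thesis
    using mu[of 1 "i - 1" j] i by (simp add: mu_eq_def)
qed

lemma solution_middle_row:
  "2 \<le> i \<Longrightarrow> i \<le> n - 1 \<Longrightarrow> M i j = (if i \<le> j \<and> j \<le> n - 1 then of_nat i * M 1 (j - i + 1) else 0)"
proof (induction i arbitrary: j rule: nat_induct_at_least)
  case base
  have "1 < j \<Longrightarrow> Suc (j - 2) = j - Suc 0" by arith
  then show ?case using solution_row_step[of 2 j] n by auto
next
  case (Suc k)
  have step: "M (Suc k) j = (if k < j \<and> j \<le> n - 1 then M 1 (j - k) else 0)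
               + (if 1 < j \<and> j \<le> n - 1 then M k (j - 1) else 0)"
    using solution_row_step[of "Suc k" j] Suc.prems Suc.hyps by simp
  have IH: "M k (j - 1) = (if k \<le> j - 1 \<and> j - 1 \<le> n - 1 then of_nat k * M 1 (j - 1 - k + 1) else 0)"
    using Suc.IH Suc.prems by simp
  show ?case
  proof (cases "Suc k \<le> j \<and> j \<le> n - 1")
    case True
    then obtain m where j: "j = Suc k + m" using le_Suc_ex by blast
    show ?thesis using True step IH Suc.hyps by (simp add: j algebra_simps)
  qed (use step IH in auto)
qed

lemma solution_last_row_low:
  assumes "1 \<le> m" "m \<le> n - 2"
  shows "M n m = (if t \<in> {4,5} \<and> m = n - 2 then - M 1 n else 0)"
proof -
  have "1 \<in> {1..n}" "n \<in> {1..n}" "\<not> 1 + n \<le> n - 1" "\<not> n < m + 1" "n - Suc (Suc 0) = n - 2"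
    using n assms by auto
  then show ?thesis
    using mu[of 1 n "m + 1"] assms n
    by (auto simp: mu_eq_def eq_neg_iff_add_eq_0 add.commute split: if_splits)
qed

lemma solution_sub_diag:
  assumes "t \<in> {4,5}"
  shows "M (n - 1) (n - 1) = 2 * M n n"
proof -
  have "n \<in> {1..n}" "\<not> n + n \<le> n - 1" "\<not> n < n - 1" using n by auto
  then show ?thesis
    using mu[of n n "n - 1"] assms by (simp add: mu_eq_def)
qed

lemma solution_br_target_row:
  assumes "t \<in> {2,3,5}"
  shows "M (br_target n t) (br_target n t) = M 1 1 + M n n"
    and "j \<noteq> br_target n t \<Longrightarrow> M (br_target n t) j = 0"
  using assms br[of 1 n "br_target n t"] br[of 1 n j] n by (auto simp: br_eq_def br_target_def)

lemma solution_sub_diag_row_1: "M (n - 1) (n - 1) = of_nat (n - 1) * M 1 1"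
  using solution_middle_row[of "n - 1" "n - 1"] n by simp

lemma solution_entry_1_1:
  assumes "t \<in> {2,5}"
  shows "M 1 1 = 0"
proof -
  consider "t = 2" | "t = 5" using assms by auto
  then show ?thesis
  proof cases
    case 1
    then show ?thesis using solution_br_target_row(1) by (simp add: br_target_def)
  next
    case 2
    have "M (n - 1) (n - 1) = M 1 1 + M n n"
      using solution_br_target_row(1) 2 by (simp add: br_target_def)
    moreover have "M (n - 1) (n - 1) = 2 * M n n"
      using solution_sub_diag 2 by simp
    moreover have "of_nat (n - 1) = (of_nat n - 1 :: complex)"
      using n by (simp add: of_nat_diff)
    ultimately have "(of_nat n - 3) * M 1 1 = 0"
      using solution_sub_diag_row_1 by algebra
    \<comment> \<open>this is where n > 3 is needed\<close>
    moreover have "(of_nat n - 3 :: complex) \<noteq> 0"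
    proof
      assume "(of_nat n - 3 :: complex) = 0"
      then have "(of_nat n :: complex) = of_nat 3" by simp
      then have "n = 3" by (simp only: of_nat_eq_iff)
      with n show False by simp
    qed
    ultimately show ?thesis by simp
  qed
qed

lemma solution_diag:
  "M n n = der_last_row n t (der_params n t M) n"
proof -
  have c: "of_nat (n - 1) = (of_nat n - 1 :: complex)" "of_nat (n - 2) = (of_nat n - 2 :: complex)"
    using n by (simp_all add: of_nat_diff)
  have "t = 1 \<or> t = 2 \<or> t = 3 \<or> t = 4 \<or> t = 5" using t by auto
  moreover have "M n n = of_nat (n - 2) * M 1 1" if "t = 3"
  proof -
    have "M (n - 1) (n - 1) = M 1 1 + M n n"
      using solution_br_target_row(1) that by (simp add: br_target_def)
    then show ?thesis
      using solution_sub_diag_row_1 c by algebra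
  qed
  moreover have "M n n = (of_nat n - 1) / 2 * M 1 1" if "t = 4"
  proof -
    have "2 * M n n = (of_nat n - 1) * M 1 1"
      using solution_sub_diag solution_sub_diag_row_1 c that by simp
    then show ?thesis by (simp add: field_simps)
  qed
  moreover have "M n n = 0" if "t = 5"
    using solution_sub_diag solution_sub_diag_row_1 solution_entry_1_1 that by simp
  ultimately show ?thesis
    using n by (auto simp: der_last_row_diag der_params_def param_set_def)
qed

lemma solution_last_row: "M n j = der_last_row n t (der_params n t M) j"
proof -
  consider "j \<in> {1..n-2}" | "j = n - 1" | "j = n" | "j \<notin> {1..n}"
    using n by fastforce
  then show ?thesis
  proof cases
    case 1
    moreover have "n \<in> param_set n t" using n by (auto simp: param_set_def)
    ultimately show ?thesis
      using solution_last_row_low[of j] der_last_row_low[of j t] t n by (simp add: der_params_def)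
  next
    case 2
    have "M n (n - 1) = 0" if "t = 2"
      using solution_br_target_row(2)[of "n - 1"] that n by (auto simp: br_target_def)
    moreover have "der_last_row n t (der_params n t M) (n - 1) =
        (if t = 2 then 0 else der_params n t M (n + 1))"
      by (rule der_last_row_sub_diag)
    ultimately show ?thesis
      using 2 t n by (auto simp: der_params_def param_set_def)
  next
    case 3
    then show ?thesis using solution_diag by simp
  next
    case 4
    then show ?thesis
      using cols[of n j] der_last_row_outside[OF 4] n by simp
  qed
qed

lemma der_params_row_1: "m \<in> {1..n} \<Longrightarrow> der_params n t M m = M 1 m"
  using t solution_entry_1_1 by (cases "m = 1") (auto simp: der_params_def param_set_def)

lemma solution_eq_der_mat: "i \<in> {1..n} \<Longrightarrow> M i = der_mat n t (der_params n t M) i"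
proof (rule ext)
  fix j assume i: "i \<in> {1..n}"
  consider "i = 1" | "2 \<le> i \<and> i \<le> n - 1" | "i = n" using i by fastforce
  then show "M i j = der_mat n t (der_params n t M) i j"
  proof cases
    case 1
    show ?thesis
    proof (cases "j \<in> {1..n}")
      case True
      then show ?thesis using der_params_row_1[OF True] 1 by (simp add: der_mat_row_Suc_0)
    next
      case False
      then show ?thesis using cols[of 1 j] 1 n by (auto simp: der_mat_row_Suc_0)
    qed
  next
    case 2
    have "i \<le> j \<and> j \<le> n - 1 \<Longrightarrow> der_params n t M (j - i + 1) = M 1 (j - i + 1)"
      using 2 by (intro der_params_row_1) auto
    then show ?thesis
      using 2 solution_middle_row[of i j] der_mat_middle_row[of i n t _ j] by simp
  next
    case 3
    show ?thesis
      unfolding 3 der_mat_last_row by (rule solution_last_row)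
  qed
qed

end

lemma n_Suc_Suc_Suc_Suc: obtains N where "n = Suc (Suc (Suc (Suc N)))"
  using n by (metis add_Suc_shift less_imp_Suc_add numeral_3_eq_3 plus_nat.add_0)

lemma mu_eq_1_n: "mu_eq n t M 1 n j \<longleftrightarrow>
   0 = (if t \<in> {4,5} \<and> j = n - 1 then M 1 n else 0) + (if 1 < j \<and> j \<le> n - 1 then M n (j - 1) else 0)"
proof -
  obtain N where nN: "n = Suc (Suc (Suc (Suc N)))" by (rule n_Suc_Suc_Suc_Suc)
  show ?thesis unfolding mu_eq_def by (simp add: nN)
qed

lemma mu_eq_mid_n:
  assumes "2 \<le> i" "i \<le> n - 1"
  shows "mu_eq n t M i n j \<longleftrightarrow>
   0 = (if t \<in> {4,5} \<and> j = n - 1 then M i n else 0) + (if i < j \<and> j \<le> n - 1 then M n (j - i) else 0)"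
proof -
  obtain N where nN: "n = Suc (Suc (Suc (Suc N)))" by (rule n_Suc_Suc_Suc_Suc)
  show ?thesis using assms unfolding mu_eq_def by (simp add: nN)
qed

lemma mu_eq_n_n: "mu_eq n t M n n j \<longleftrightarrow>
   (if t \<in> {4,5} then M (n - 1) j else 0) = 2 * (if t \<in> {4,5} \<and> j = n - 1 then M n n else 0)"
proof -
  obtain N where nN: "n = Suc (Suc (Suc (Suc N)))" by (rule n_Suc_Suc_Suc_Suc)
  show ?thesis unfolding mu_eq_def by (auto simp add: nN)
qed

context
  fixes t :: nat and p :: "nat \<Rightarrow> complex"
  assumes t: "t \<in> {1..5}" and p1: "t \<in> {2,5} \<Longrightarrow> p 1 = 0"
begin

lemma der_mat_mu_eq_1_1: "mu_eq n t (der_mat n t p) 1 1 j"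
proof (cases "2 \<le> j \<and> j \<le> n - 1")
  case True
  then obtain m where j: "j = m + 2" using le_Suc_ex[of 2 j] by auto
  show ?thesis using True n unfolding mu_eq_def j
    by (auto simp add: der_mat_row_1 der_mat_row_Suc_0 der_mat_middle_row)
next
  case False
  then show ?thesis
    using n unfolding mu_eq_def by (auto simp add: der_mat_row_1 der_mat_row_Suc_0 der_mat_middle_row)
qed

lemma der_mat_mu_eq_1_mid:
  assumes l: "2 \<le> l" "l \<le> n - 1"
  shows "mu_eq n t (der_mat n t p) 1 l j"
proof (cases "l + 1 \<le> j \<and> j \<le> n - 1")
  case True
  then obtain m where j: "j = m + l + 1" using le_Suc_ex[of "l+1" j] by auto
  have a: "1 + l \<le> n - 1" "2 \<le> 1 + l" using True l by auto
  have v1: "der_mat n t p (1 + l) j = of_nat (1 + l) * p (m + 1)"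
    using der_mat_middle_row[OF a(2) a(1), of t p j] True by (simp add: j)
  have mn: "m + 1 \<le> n" using True j by auto
  have v2: "der_mat n t p 1 (j - l) = p (m + 1)"
    using der_mat_row_1[of n t p "j - l"] True n mn by (simp add: j)
  have v3: "der_mat n t p l (j - 1) = of_nat l * p (m + 1)"
    using der_mat_middle_row[OF l, of t p "j - 1"] True by (simp add: j)
  have f: "l < j" "1 < j" "l \<noteq> n" "(1::nat) \<noteq> n" using True l n by auto
  have "mu_eq n t (der_mat n t p) 1 l j \<longleftrightarrow>
      der_mat n t p (1 + l) j = der_mat n t p 1 (j - l) + der_mat n t p l (j - 1)"
    unfolding mu_eq_def using a f True by simp
  then show ?thesis using v1 v2 v3 by (simp add: algebra_simps)
next
  case False
  show ?thesis using False n l unfolding mu_eq_def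
    by (auto simp add: der_mat_row_1 der_mat_row_Suc_0 der_mat_middle_row)
qed

lemma der_mat_mu_eq_1_n: "mu_eq n t (der_mat n t p) 1 n j"
proof -
  have m1n: "der_mat n t p 1 n = p n" using n der_mat_row_1[of n t p n] by simp
  have "(if t \<in> {4,5} \<and> j = n - 1 then p n else 0)
      + (if 1 < j \<and> j \<le> n - 1 then der_last_row n t p (j - 1) else 0) = 0"
  proof (cases "1 < j \<and> j \<le> n - 1")
    case True
    have e: "(j - 1 = n - 2) = (j = n - 1)" using True n by auto
    show ?thesis using True n der_last_row_low[of "j - 1" t p] t by (auto simp: e)
  next
    case False
    then have "j \<noteq> n - 1" using n by auto
    then show ?thesis using False by auto
  qed
  then show ?thesis unfolding mu_eq_1_n der_mat_last_row m1n by (rule sym)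
qed

lemma der_mat_mu_eq_mid_mid:
  assumes i: "2 \<le> i" "i \<le> n - 1" and l: "2 \<le> l" "l \<le> n - 1"
  shows "mu_eq n t (der_mat n t p) i l j"
proof (cases "i + l \<le> j \<and> j \<le> n - 1")
  case True
  then obtain m where j: "j = m + i + l" using le_Suc_ex[of "i+l" j] by auto
  have a: "2 \<le> i + l" "i + l \<le> n - 1" using True i by auto
  have v1: "der_mat n t p (i + l) j = of_nat (i + l) * p (m + 1)"
    using der_mat_middle_row[OF a, of t p j] True by (simp add: j)
  have v2: "der_mat n t p i (j - l) = of_nat i * p (m + 1)"
    using der_mat_middle_row[OF i, of t p "j - l"] True by (simp add: j)
  have v3: "der_mat n t p l (j - i) = of_nat l * p (m + 1)"
    using der_mat_middle_row[OF l, of t p "j - i"] True by (simp add: j)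
  have f: "l < j" "i < j" "l \<noteq> n" "i \<noteq> n" using True i l n by auto
  have "mu_eq n t (der_mat n t p) i l j \<longleftrightarrow>
      der_mat n t p (i + l) j = der_mat n t p i (j - l) + der_mat n t p l (j - i)"
    unfolding mu_eq_def using a f True by simp
  then show ?thesis using v1 v2 v3 by (simp add: algebra_simps)
next
  case False
  have z1: "(if i + l \<le> n - 1 then der_mat n t p (i + l) j else 0) = 0"
  proof (cases "i + l \<le> n - 1")
    case True
    have a2: "2 \<le> i + l" using i by auto
    show ?thesis using der_mat_middle_row[OF a2 True, of t p j] False True by auto
  qed simp
  have z2: "(if l < j \<and> j \<le> n - 1 then der_mat n t p i (j - l) else 0) = 0"
    using der_mat_middle_row[OF i, of t p "j - l"] False by auto
  have z3: "(if i < j \<and> j \<le> n - 1 then der_mat n t p l (j - i) else 0) = 0"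
    using der_mat_middle_row[OF l, of t p "j - i"] False by auto
  have f: "i \<noteq> n" "l \<noteq> n" using i l n by auto
  show ?thesis unfolding mu_eq_def using z1 z2 z3 f by simp
qed

lemma der_mat_mu_eq_mid_n:
  assumes i: "2 \<le> i" "i \<le> n - 1"
  shows "mu_eq n t (der_mat n t p) i n j"
proof -
  have nn: "\<not> n \<le> n - Suc 0" using n by auto
  have min: "der_mat n t p i n = 0" using n i der_mat_middle_row[OF i, of t p n] nn by simp
  have "(if i < j \<and> j \<le> n - 1 then der_last_row n t p (j - i) else 0) = 0"
    using der_last_row_low[of "j - i" t p] t n i by auto
  then show ?thesis unfolding mu_eq_mid_n[OF i] der_mat_last_row min by simp
qed

lemma der_mat_mu_eq_n_n: "mu_eq n t (der_mat n t p) n n j"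
proof -
  have a: "2 \<le> n - 1" "n - 1 \<le> n - 1" using n by auto
  have r: "der_mat n t p (n - 1) j = (if j = n - 1 then of_nat (n - 1) * p 1 else 0)"
    using n der_mat_middle_row[OF a, of t p j] by auto
  have c: "of_nat (n-1) = (of_nat n - 1 :: complex)" using n by (simp add: of_nat_diff)
  have "(if t \<in> {4,5} then der_mat n t p (n - 1) j else 0) =
      2 * (if t \<in> {4,5} \<and> j = n - 1 then der_last_row n t p n else 0)"
  proof (cases "t \<in> {4,5} \<and> j = n - 1")
    case True
    then have "t = 4 \<or> t = 5" by auto
    then show ?thesis
    proof
      assume t4: "t = 4"
      show ?thesis using True r c by (simp add: der_last_row_diag t4)
    next
      assume t5: "t = 5"
      show ?thesis using True r c p1 by (simp add: der_last_row_diag t5)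
    qed
  next
    case False
    then show ?thesis using r by auto
  qed
  then show ?thesis using n by (simp add: mu_eq_n_n der_mat_last_row)
qed

lemma der_mat_mu_eq:
  assumes i: "i \<in> {1..n}" and l: "l \<in> {1..n}"
  shows "mu_eq n t (der_mat n t p) i l j"
proof -
  have ordered: "mu_eq n t (der_mat n t p) a b j"
    if "a \<le> b" "a = 1 \<or> (2 \<le> a \<and> a \<le> n - 1) \<or> a = n" "b = 1 \<or> (2 \<le> b \<and> b \<le> n - 1) \<or> b = n" for a b
    using that n der_mat_mu_eq_1_1 der_mat_mu_eq_1_mid der_mat_mu_eq_1_n der_mat_mu_eq_mid_mid
      der_mat_mu_eq_mid_n der_mat_mu_eq_n_n by auto
  have "i = 1 \<or> (2 \<le> i \<and> i \<le> n - 1) \<or> i = n" "l = 1 \<or> (2 \<le> l \<and> l \<le> n - 1) \<or> l = n"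
    using i l by auto
  then show ?thesis
    using ordered[of i l] ordered[of l i] mu_eq_commute by (cases "i \<le> l") auto
qed

lemma der_mat_col_1:
  assumes "x \<in> {2..n}"
  shows "der_mat n t p x 1 = 0"
proof (cases "x = n")
  case True
  have "der_last_row n t p 1 = 0" using der_last_row_low[of 1 t p] t n by auto
  then show ?thesis using True der_mat_last_row by simp
next
  case False
  then show ?thesis using assms der_mat_middle_row[of x n t p 1] by auto
qed

lemma der_mat_col_n:
  assumes "x \<in> {2..n-1}"
  shows "der_mat n t p x n = 0"
  using assms der_mat_middle_row[of x n t p n] n by auto

lemma der_mat_br_target_row:
  assumes "t \<in> {2,3,5}"
  shows "der_mat n t p (br_target n t) j =
    (if j = br_target n t then der_mat n t p 1 1 + der_mat n t p n n else 0)"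
proof -
  have m11: "der_mat n t p 1 1 = p 1" using n by (simp add: der_mat_row_1 der_mat_row_Suc_0)
  have mnn: "der_mat n t p n n = der_last_row n t p n" by (rule der_mat_last_row)
  consider "t = 2" | "t = 3" | "t = 5" using assms by auto
  then show ?thesis
  proof cases
    case 1
    have "der_last_row n t p j = (if j = n then p (n+2) else 0)" using 1 by (simp add: der_last_row_def)
    then show ?thesis
      using 1 p1 m11 mnn der_mat_last_row[of t p j] der_last_row_diag[of t p] by (simp add: br_target_def)
  next
    case 2
    have a: "2 \<le> n - 1" "n - 1 \<le> n - 1" using n by auto
    have c: "of_nat (n-1) = (of_nat n - 1 :: complex)" "of_nat (n-2) = (of_nat n - 2 :: complex)"
      using n by (simp_all add: of_nat_diff)
    have "der_mat n t p (n - 1) j = (if j = n - 1 then of_nat (n - 1) * p 1 else 0)"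
      using der_mat_middle_row[OF a, of t p j] n by auto
    moreover have "der_last_row n t p n = of_nat (n-2) * p 1" using der_last_row_diag[of t p] 2 by simp
    moreover have "of_nat (n-1) * p 1 = p 1 + of_nat (n-2) * p 1" using c by algebra
    ultimately show ?thesis using 2 m11 mnn by (simp add: br_target_def)
  next
    case 3
    have a: "2 \<le> n - 1" "n - 1 \<le> n - 1" using n by auto
    have "der_mat n t p (n - 1) j = (if j = n - 1 then of_nat (n - 1) * p 1 else 0)"
      using der_mat_middle_row[OF a, of t p j] n by auto
    then show ?thesis using 3 p1 m11 mnn der_last_row_diag[of t p] by (simp add: br_target_def)
  qed
qed

lemma der_mat_br_eq:
  assumes i: "i \<in> {1..n}" and l: "l \<in> {1..n}"
  shows "br_eq n t (der_mat n t p) i l j"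
proof (cases "t \<in> {2,3,5}")
  case True
  have "i = 1 \<or> i \<in> {2..n-1} \<or> i = n" "l = 1 \<or> l \<in> {2..n-1} \<or> l = n"
    using i l by auto
  moreover have "der_mat n t p n 1 = 0" using der_mat_col_1[of n] n by auto
  ultimately show ?thesis
    using True n der_mat_br_target_row[OF True, of j] der_mat_col_1 der_mat_col_n
    by (auto simp: br_eq_def)
qed (simp add: br_eq_def)

end

end

section \<open>The space of derivations\<close>

lemma der_last_row_add: "der_last_row n t (\<lambda>m. p m + q m) j = der_last_row n t p j + der_last_row n t q j"
  unfolding der_last_row_def by (simp add: distrib_left)

lemma der_mat_add: "der_mat n t (\<lambda>m. p m + q m) i j = der_mat n t p i j + der_mat n t q i j"
  unfolding der_mat_def by (simp add: distrib_left der_last_row_add)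

lemma der_last_row_scale: "der_last_row n t (\<lambda>m. c * p m) j = c * der_last_row n t p j"
  unfolding der_last_row_def by (simp add: mult_ac)

lemma der_mat_scale: "der_mat n t (\<lambda>m. c * p m) i j = c * der_mat n t p i j"
  unfolding der_mat_def by (simp add: der_last_row_scale mult_ac)

lemma der_mat_sum:
  "der_mat n t (\<lambda>m. \<Sum>k\<in>A. c k * q k m) = (\<lambda>i j. \<Sum>k\<in>A. c k * der_mat n t (q k) i j)"
proof (induction A rule: infinite_finite_induct)
  case (insert a A)
  then show ?case by (simp add: fun_eq_iff der_mat_add der_mat_scale)
qed (use der_mat_scale[of n t 0] in simp_all)

lemma der_params_cong: "M 1 = M' 1 \<Longrightarrow> M n = M' n \<Longrightarrow> der_params n t M = der_params n t M'"
  by (simp add: der_params_def fun_eq_iff)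

definition der_basis :: "nat \<Rightarrow> nat \<Rightarrow> nat \<Rightarrow> (nat \<Rightarrow> complex) \<Rightarrow> nat \<Rightarrow> complex" where
  "der_basis n t k = mat_map n (der_mat n t (ebas k))"

lemma sum_dscale_der_basis:
  "(\<Sum>k\<in>A. dscale (q k) (der_basis n t k)) = mat_map n (der_mat n t (\<lambda>m. \<Sum>k\<in>A. q k * ebas k m))"
  by (simp add: der_basis_def der_mat_sum mat_map_sum)

context
  fixes n :: nat
  assumes n: "3 < n"
begin

lemma der_params_der_mat:
  assumes t: "t \<in> {1..5}" and p: "\<And>m. m \<notin> param_set n t \<Longrightarrow> p m = 0"
  shows "der_params n t (der_mat n t p) = p"
proof
  fix m
  show "der_params n t (der_mat n t p) m = p m"
  proof (cases "m \<in> param_set n t")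
    case True
    then have "m \<in> {1..n+2}" by (auto simp: param_set_def split: if_splits)
    then consider "m \<le> n" | "m = n + 1" | "m = n + 2" by fastforce
    then show ?thesis
    proof cases
      case 1
      then show ?thesis using True \<open>m \<in> {1..n+2}\<close> by (simp add: der_params_def der_mat_row_Suc_0)
    next
      case 2
      then have "t \<noteq> 2" using True by (auto simp: param_set_def)
      then show ?thesis
        using 2 True n by (auto simp: der_params_def der_mat_last_row der_last_row_def)
    next
      case 3
      then have "t = 1 \<or> t = 2" using True t by (auto simp: param_set_def split: if_splits)
      then show ?thesis
        using 3 True n by (auto simp: der_params_def der_mat_last_row der_last_row_diag)
    qed
  qed (simp add: der_params_def p)
qed

lemma der_params_mat_map_der_mat:
  assumes t: "t \<in> {1..5}" and p: "\<And>m. m \<notin> param_set n t \<Longrightarrow> p m = 0"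
  shows "der_params n t (\<lambda>i. mat_map n (der_mat n t p) (ebas i)) = p"
proof -
  have "der_params n t (\<lambda>i. mat_map n (der_mat n t p) (ebas i)) = der_params n t (der_mat n t p)"
    using n by (intro der_params_cong) (simp_all add: mat_map_ebas)
  then show ?thesis
    using der_params_der_mat[OF t p] by simp
qed

lemma is_der_mat_map_der_mat:
  assumes t: "t \<in> {1..5}" and p1: "t \<in> {2,5} \<Longrightarrow> p 1 = 0"
  shows "is_der n t (mat_map n (der_mat n t p))"
proof (rule leibniz_mat_is_der)
  show "leibniz_mat n (mu n t) (der_mat n t p)"
    using leibniz_mat_mu_iff[OF n] der_mat_mu_eq[where p = p, OF n t p1] by blast
  show "leibniz_mat n (br n t) (der_mat n t p)"
    using leibniz_mat_br_iff[OF n] der_mat_br_eq[where p = p, OF n t p1] by blast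
qed (use n der_mat_outside_cols[OF n] in auto)

lemma is_der_eq_mat_map_der_mat:
  assumes t: "t \<in> {1..5}" and \<phi>: "is_der n t \<phi>"
  shows "\<phi> = mat_map n (der_mat n t (der_params n t (\<lambda>i. \<phi> (ebas i))))"
proof -
  let ?M = "\<lambda>i. \<phi> (ebas i)"
  have n2: "2 \<le> n" using n by simp
  have cols: "?M i j = 0" if "i \<in> {1..n}" "j \<notin> {1..n}" for i j
    using \<phi> ebas_in_V[OF that(1)] that(2) by (auto simp: is_der_def V_def)
  have mu: "mu_eq n t ?M i l j" if "i \<in> {1..n}" "l \<in> {1..n}" for i l j
    using is_der_leibniz_mat(1)[OF \<phi> n2] leibniz_mat_mu_iff[OF n] that by blast
  have br: "br_eq n t ?M i l j" if "i \<in> {1..n}" "l \<in> {1..n}" for i l j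
    using is_der_leibniz_mat(2)[OF \<phi> n2] leibniz_mat_br_iff[OF n] that by blast
  have "?M i = der_mat n t (der_params n t ?M) i" if "i \<in> {1..n}" for i
    by (rule solution_eq_der_mat[OF n t mu br cols that])
  then have "mat_map n ?M = mat_map n (der_mat n t (der_params n t ?M))"
    by (rule mat_map_cong)
  moreover have "\<phi> = mat_map n ?M"
    using \<phi> by (intro linear_on_V_eq_mat_map) (auto simp: is_der_def linear_on_V_def)
  ultimately show ?thesis by simp
qed

lemma Der_eq_mat_map_der_mat:
  assumes t: "t \<in> {1..5}"
  shows "Der n t = {mat_map n (der_mat n t p) | p. \<forall>m. m \<notin> param_set n t \<longrightarrow> p m = 0}"
proof
  show "Der n t \<subseteq> {mat_map n (der_mat n t p) | p. \<forall>m. m \<notin> param_set n t \<longrightarrow> p m = 0}"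
  proof
    fix \<phi> assume "\<phi> \<in> Der n t"
    then have "\<phi> = mat_map n (der_mat n t (der_params n t (\<lambda>i. \<phi> (ebas i))))"
      using is_der_eq_mat_map_der_mat[OF t] by (simp add: Der_def)
    moreover have "\<forall>m. m \<notin> param_set n t \<longrightarrow> der_params n t (\<lambda>i. \<phi> (ebas i)) m = 0"
      by (simp add: der_params_def)
    ultimately show "\<phi> \<in> {mat_map n (der_mat n t p) | p. \<forall>m. m \<notin> param_set n t \<longrightarrow> p m = 0}"
      by blast
  qed
  show "{mat_map n (der_mat n t p) | p. \<forall>m. m \<notin> param_set n t \<longrightarrow> p m = 0} \<subseteq> Der n t"
    using is_der_mat_map_der_mat[OF t] one_notin_param_set by (auto simp: Der_def)
qed

lemma Der_ebas_eq_der_mat: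
  assumes t: "t \<in> {1..5}" and \<phi>: "\<phi> \<in> Der n t"
  obtains p where "\<And>m. m \<notin> param_set n t \<Longrightarrow> p m = 0"
    and "\<And>i. i \<in> {1..n} \<Longrightarrow> \<phi> (ebas i) = der_mat n t p i"
proof -
  obtain p where "\<forall>m. m \<notin> param_set n t \<longrightarrow> p m = 0" "\<phi> = mat_map n (der_mat n t p)"
    using \<phi> unfolding Der_eq_mat_map_der_mat[OF t] by blast
  then show thesis
    by (intro that[of p]) (auto simp: mat_map_ebas)
qed

lemma der_basis_in_Der:
  assumes t: "t \<in> {1..5}" and k: "k \<in> param_set n t"
  shows "der_basis n t k \<in> Der n t"
proof -
  have "\<forall>m. m \<notin> param_set n t \<longrightarrow> ebas k m = 0" using k by (auto simp: ebas_def)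
  then show ?thesis unfolding Der_eq_mat_map_der_mat[OF t] der_basis_def by blast
qed

lemma der_params_der_basis:
  assumes t: "t \<in> {1..5}" and k: "k \<in> param_set n t"
  shows "der_params n t (\<lambda>i. der_basis n t k (ebas i)) = ebas k"
  unfolding der_basis_def
  by (rule der_params_mat_map_der_mat[OF t]) (use k in \<open>auto simp: ebas_def\<close>)

lemma inj_on_der_basis:
  assumes t: "t \<in> {1..5}"
  shows "inj_on (der_basis n t) (param_set n t)"
proof (rule inj_onI)
  fix a b assume a: "a \<in> param_set n t" and b: "b \<in> param_set n t" and "der_basis n t a = der_basis n t b"
  then have "ebas a = ebas b"
    using der_params_der_basis[OF t a] der_params_der_basis[OF t b] by metis
  then have "ebas a a = ebas b a" by simp
  then show "a = b" by (auto simp: ebas_def split: if_splits)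
qed

lemma Der_subset_span_der_basis:
  assumes t: "t \<in> {1..5}"
  shows "Der n t \<subseteq> module.span dscale (der_basis n t ` param_set n t)"
proof
  interpret vs: vector_space dscale by (rule vector_space_dscale)
  fix \<phi> assume "\<phi> \<in> Der n t"
  then obtain p where p: "\<And>m. m \<notin> param_set n t \<Longrightarrow> p m = 0" and \<phi>: "\<phi> = mat_map n (der_mat n t p)"
    unfolding Der_eq_mat_map_der_mat[OF t] by blast
  have "(\<lambda>m. \<Sum>k\<in>param_set n t. p k * ebas k m) = p"
    using p finite_param_set by (auto simp: sum_mult_ebas)
  then have "\<phi> = (\<Sum>k\<in>param_set n t. dscale (p k) (der_basis n t k))"
    using \<phi> sum_dscale_der_basis[where q = p and A = "param_set n t"] by simp
  also have "\<dots> \<in> vs.span (der_basis n t ` param_set n t)"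
    by (intro vs.span_sum) (auto intro: vs.span_scale vs.span_base)
  finally show "\<phi> \<in> vs.span (der_basis n t ` param_set n t)" .
qed

lemma der_basis_coeffs_zero:
  assumes t: "t \<in> {1..5}" and sum0: "(\<Sum>k\<in>param_set n t. dscale (q k) (der_basis n t k)) = 0"
    and k: "k \<in> param_set n t"
  shows "q k = 0"
proof -
  define p where "p = (\<lambda>m. \<Sum>k\<in>param_set n t. q k * ebas k m)"
  have p_supp: "p m = 0" if "m \<notin> param_set n t" for m
    using that finite_param_set by (simp add: p_def sum_mult_ebas)
  have "mat_map n (der_mat n t p) = 0"
    using sum0 sum_dscale_der_basis[where q = q and A = "param_set n t"] by (simp add: p_def)
  then have "p = der_params n t (\<lambda>i. (0 :: (nat \<Rightarrow> complex) \<Rightarrow> nat \<Rightarrow> complex) (ebas i))"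
    using der_params_mat_map_der_mat[OF t, of p, OF p_supp] by simp
  then have "p k = 0" by (simp add: der_params_def)
  then show "q k = 0"
    using k finite_param_set by (simp add: p_def sum_mult_ebas)
qed

lemma independent_der_basis:
  assumes t: "t \<in> {1..5}"
  shows "\<not> module.dependent dscale (der_basis n t ` param_set n t)"
proof -
  interpret vs: vector_space dscale by (rule vector_space_dscale)
  let ?D = "der_basis n t"
  have "f x = 0" if sum0: "(\<Sum>x\<in>?D ` param_set n t. dscale (f x) x) = 0"
    and x: "x \<in> ?D ` param_set n t" for f x
  proof -
    obtain k where k: "k \<in> param_set n t" "x = ?D k" using x by blast
    have "(\<Sum>k\<in>param_set n t. dscale (f (?D k)) (?D k)) = 0"
      using sum0 by (simp only: sum.reindex[OF inj_on_der_basis[OF t]] comp_def)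
    then show "f x = 0"
      using der_basis_coeffs_zero[OF t, of "\<lambda>k. f (?D k)" k] k by simp
  qed
  then show ?thesis
    by (intro vs.independent_if_scalars_zero) (use finite_param_set in auto)
qed

lemma dimDer_eq_card_param_set:
  assumes t: "t \<in> {1..5}"
  shows "dimDer n t = card (param_set n t)"
proof -
  interpret vs: vector_space dscale by (rule vector_space_dscale)
  show ?thesis
    unfolding dimDer_def
    by (rule vs.dim_unique[OF _ Der_subset_span_der_basis[OF t] independent_der_basis[OF t]
          card_image[OF inj_on_der_basis[OF t]]])
      (use der_basis_in_Der[OF t] in blast)
qed

lemma card_param_set:
  "card (param_set n 1) = n + 2" "card (param_set n 2) = n" "card (param_set n 3) = n + 1"
  "card (param_set n 4) = n + 1" "card (param_set n 5) = n"
proof -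
  have "card ({2..n} \<union> {n+2}) = card {2..n} + card {n+2}"
    by (rule card_Un_disjoint) auto
  then show "card (param_set n 2) = n" using n by (simp add: param_set_def)
qed (simp_all add: param_set_def)

end

lemma der_mat_row_1_eq_sum: "der_mat n t p 1 = (\<lambda>j. \<Sum>k\<in>{1..n}. p k * ebas k j)"
  by (rule ext) (simp add: sum_mult_ebas der_mat_row_Suc_0)

lemma der_mat_row_1_eq_sum_from_2:
  assumes "p 1 = 0"
  shows "der_mat n t p 1 = (\<lambda>j. \<Sum>k\<in>{2..n}. p k * ebas k j)"
proof
  fix j show "der_mat n t p 1 j = (\<Sum>k\<in>{2..n}. p k * ebas k j)"
    using assms by (cases "j = 1") (auto simp: sum_mult_ebas der_mat_row_Suc_0)
qed

lemma der_mat_middle_row_eq_sum: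
  "i \<in> {2..n-1} \<Longrightarrow> der_mat n t p i = (\<lambda>j. \<Sum>k\<in>{i..n-1}. of_nat i * p (k - i + 1) * ebas k j)"
  by (rule ext) (simp add: sum_mult_ebas der_mat_middle_row)

lemma der_mat_middle_row_eq_sum_from_succ:
  "i \<in> {2..n-1} \<Longrightarrow> p 1 = 0 \<Longrightarrow>
   der_mat n t p i = (\<lambda>j. \<Sum>k\<in>{i+1..n-1}. of_nat i * p (k - i + 1) * ebas k j)"
  by (rule ext) (auto simp: sum_mult_ebas der_mat_middle_row)

lemma Der_P11_form:
  assumes n: "3 < n" and \<phi>: "\<phi> \<in> Der n 1"
  shows "\<exists>(lam :: nat \<Rightarrow> complex) a b.
    \<phi> (ebas 1) = (\<lambda>j. \<Sum>k\<in>{1..n}. lam k * ebas k j) \<and>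
    (\<forall>i\<in>{2..n-1}. \<phi> (ebas i) = (\<lambda>j. \<Sum>k\<in>{i..n-1}. of_nat i * lam (k - i + 1) * ebas k j)) \<and>
    \<phi> (ebas n) = (\<lambda>j. a * ebas (n-1) j + b * ebas n j)"
proof -
  obtain p where "\<And>m. m \<notin> param_set n 1 \<Longrightarrow> p m = 0"
    and rows: "\<And>i. i \<in> {1..n} \<Longrightarrow> \<phi> (ebas i) = der_mat n 1 p i"
    by (rule Der_ebas_eq_der_mat[OF n _ \<phi>]) auto
  have "\<phi> (ebas n) = (\<lambda>j. p (n+1) * ebas (n-1) j + p (n+2) * ebas n j)"
    using rows[of n] n by (auto simp: der_mat_last_row der_last_row_def ebas_def fun_eq_iff)
  then show ?thesis
    using rows n der_mat_row_1_eq_sum der_mat_middle_row_eq_sum by (intro exI) auto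
qed

lemma Der_P12_form:
  assumes n: "3 < n" and \<phi>: "\<phi> \<in> Der n 2"
  shows "\<exists>(lam :: nat \<Rightarrow> complex) b.
    \<phi> (ebas 1) = (\<lambda>j. \<Sum>k\<in>{2..n}. lam k * ebas k j) \<and>
    (\<forall>i\<in>{2..n-1}. \<phi> (ebas i) = (\<lambda>j. \<Sum>k\<in>{i+1..n-1}. of_nat i * lam (k - i + 1) * ebas k j)) \<and>
    \<phi> (ebas n) = (\<lambda>j. b * ebas n j)"
proof -
  obtain p where supp: "\<And>m. m \<notin> param_set n 2 \<Longrightarrow> p m = 0"
    and rows: "\<And>i. i \<in> {1..n} \<Longrightarrow> \<phi> (ebas i) = der_mat n 2 p i"
    by (rule Der_ebas_eq_der_mat[OF n _ \<phi>]) auto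
  have p1: "p 1 = 0" using supp one_notin_param_set by simp
  have "\<phi> (ebas n) = (\<lambda>j. p (n+2) * ebas n j)"
    using rows[of n] n by (auto simp: der_mat_last_row der_last_row_def ebas_def fun_eq_iff)
  then show ?thesis
    using rows n der_mat_row_1_eq_sum_from_2[where p = p, OF p1]
      der_mat_middle_row_eq_sum_from_succ[where p = p, OF _ p1]
    by (intro exI) auto
qed

lemma Der_P13_form:
  assumes n: "3 < n" and \<phi>: "\<phi> \<in> Der n 3"
  shows "\<exists>(lam :: nat \<Rightarrow> complex) a.
    \<phi> (ebas 1) = (\<lambda>j. \<Sum>k\<in>{1..n}. lam k * ebas k j) \<and>
    (\<forall>i\<in>{2..n-1}. \<phi> (ebas i) = (\<lambda>j. \<Sum>k\<in>{i..n-1}. of_nat i * lam (k - i + 1) * ebas k j)) \<and>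
    \<phi> (ebas n) = (\<lambda>j. a * ebas (n-1) j + of_nat (n - 2) * lam 1 * ebas n j)"
proof -
  obtain p where "\<And>m. m \<notin> param_set n 3 \<Longrightarrow> p m = 0"
    and rows: "\<And>i. i \<in> {1..n} \<Longrightarrow> \<phi> (ebas i) = der_mat n 3 p i"
    by (rule Der_ebas_eq_der_mat[OF n _ \<phi>]) auto
  have "\<phi> (ebas n) = (\<lambda>j. p (n+1) * ebas (n-1) j + of_nat (n - 2) * p 1 * ebas n j)"
    using rows[of n] n by (auto simp: der_mat_last_row der_last_row_def ebas_def fun_eq_iff)
  then show ?thesis
    using rows n der_mat_row_1_eq_sum der_mat_middle_row_eq_sum by (intro exI) auto
qed

lemma Der_P14_form:
  assumes n: "3 < n" and \<phi>: "\<phi> \<in> Der n 4"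
  shows "\<exists>(lam :: nat \<Rightarrow> complex) a.
    \<phi> (ebas 1) = (\<lambda>j. \<Sum>k\<in>{1..n}. lam k * ebas k j) \<and>
    (\<forall>i\<in>{2..n-1}. \<phi> (ebas i) = (\<lambda>j. \<Sum>k\<in>{i..n-1}. of_nat i * lam (k - i + 1) * ebas k j)) \<and>
    \<phi> (ebas n) = (\<lambda>j. - lam n * ebas (n-2) j + a * ebas (n-1) j + (of_nat n - 1) / 2 * lam 1 * ebas n j)"
proof -
  obtain p where "\<And>m. m \<notin> param_set n 4 \<Longrightarrow> p m = 0"
    and rows: "\<And>i. i \<in> {1..n} \<Longrightarrow> \<phi> (ebas i) = der_mat n 4 p i"
    by (rule Der_ebas_eq_der_mat[OF n _ \<phi>]) auto
  have "\<phi> (ebas n) =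
      (\<lambda>j. - p n * ebas (n-2) j + p (n+1) * ebas (n-1) j + (of_nat n - 1) / 2 * p 1 * ebas n j)"
    using rows[of n] n by (auto simp: der_mat_last_row der_last_row_def ebas_def fun_eq_iff)
  then show ?thesis
    using rows n der_mat_row_1_eq_sum der_mat_middle_row_eq_sum by (intro exI) auto
qed

lemma Der_P15_form:
  assumes n: "3 < n" and \<phi>: "\<phi> \<in> Der n 5"
  shows "\<exists>(lam :: nat \<Rightarrow> complex) a.
    \<phi> (ebas 1) = (\<lambda>j. \<Sum>k\<in>{2..n}. lam k * ebas k j) \<and>
    (\<forall>i\<in>{2..n-1}. \<phi> (ebas i) = (\<lambda>j. \<Sum>k\<in>{i+1..n-1}. of_nat i * lam (k - i + 1) * ebas k j)) \<and>
    \<phi> (ebas n) = (\<lambda>j. - lam n * ebas (n-2) j + a * ebas (n-1) j)"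
proof -
  obtain p where supp: "\<And>m. m \<notin> param_set n 5 \<Longrightarrow> p m = 0"
    and rows: "\<And>i. i \<in> {1..n} \<Longrightarrow> \<phi> (ebas i) = der_mat n 5 p i"
    by (rule Der_ebas_eq_der_mat[OF n _ \<phi>]) auto
  have p1: "p 1 = 0" using supp one_notin_param_set by simp
  have "\<phi> (ebas n) = (\<lambda>j. - p n * ebas (n-2) j + p (n+1) * ebas (n-1) j)"
    using rows[of n] n by (auto simp: der_mat_last_row der_last_row_def ebas_def fun_eq_iff)
  then show ?thesis
    using rows n der_mat_row_1_eq_sum_from_2[where p = p, OF p1]
      der_mat_middle_row_eq_sum_from_succ[where p = p, OF _ p1]
    by (intro exI) auto
qed

theorem lemma5p2:
  fixes n :: nat
  assumes "n > 3"
  shows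
   "(\<forall>\<phi>\<in>Der n 1. \<exists>(lam :: nat \<Rightarrow> complex) a b.
        \<phi> (ebas 1) = (\<lambda>j. \<Sum>k\<in>{1..n}. lam k * ebas k j) \<and>
        (\<forall>i\<in>{2..n-1}. \<phi> (ebas i) = (\<lambda>j. \<Sum>k\<in>{i..n-1}. of_nat i * lam (k - i + 1) * ebas k j)) \<and>
        \<phi> (ebas n) = (\<lambda>j. a * ebas (n-1) j + b * ebas n j))
    \<and> dimDer n 1 = n + 2
    \<and> (\<forall>\<phi>\<in>Der n 2. \<exists>(lam :: nat \<Rightarrow> complex) b.
        \<phi> (ebas 1) = (\<lambda>j. \<Sum>k\<in>{2..n}. lam k * ebas k j) \<and>
        (\<forall>i\<in>{2..n-1}. \<phi> (ebas i) = (\<lambda>j. \<Sum>k\<in>{i+1..n-1}. of_nat i * lam (k - i + 1) * ebas k j)) \<and>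
        \<phi> (ebas n) = (\<lambda>j. b * ebas n j))
    \<and> dimDer n 2 = n
    \<and> (\<forall>\<phi>\<in>Der n 3. \<exists>(lam :: nat \<Rightarrow> complex) a.
        \<phi> (ebas 1) = (\<lambda>j. \<Sum>k\<in>{1..n}. lam k * ebas k j) \<and>
        (\<forall>i\<in>{2..n-1}. \<phi> (ebas i) = (\<lambda>j. \<Sum>k\<in>{i..n-1}. of_nat i * lam (k - i + 1) * ebas k j)) \<and>
        \<phi> (ebas n) = (\<lambda>j. a * ebas (n-1) j + of_nat (n - 2) * lam 1 * ebas n j))
    \<and> dimDer n 3 = n + 1
    \<and> (\<forall>\<phi>\<in>Der n 4. \<exists>(lam :: nat \<Rightarrow> complex) a.
        \<phi> (ebas 1) = (\<lambda>j. \<Sum>k\<in>{1..n}. lam k * ebas k j) \<and>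
        (\<forall>i\<in>{2..n-1}. \<phi> (ebas i) = (\<lambda>j. \<Sum>k\<in>{i..n-1}. of_nat i * lam (k - i + 1) * ebas k j)) \<and>
        \<phi> (ebas n) = (\<lambda>j. - lam n * ebas (n-2) j + a * ebas (n-1) j
                          + (of_nat n - 1) / 2 * lam 1 * ebas n j))
    \<and> dimDer n 4 = n + 1
    \<and> (\<forall>\<phi>\<in>Der n 5. \<exists>(lam :: nat \<Rightarrow> complex) a.
        \<phi> (ebas 1) = (\<lambda>j. \<Sum>k\<in>{2..n}. lam k * ebas k j) \<and>
        (\<forall>i\<in>{2..n-1}. \<phi> (ebas i) = (\<lambda>j. \<Sum>k\<in>{i+1..n-1}. of_nat i * lam (k - i + 1) * ebas k j)) \<and>
        \<phi> (ebas n) = (\<lambda>j. - lam n * ebas (n-2) j + a * ebas (n-1) j))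
    \<and> dimDer n 5 = n"
proof -
  have dims: "dimDer n t = card (param_set n t)" if "t \<in> {1..5}" for t
    using dimDer_eq_card_param_set[OF assms that] .
  show ?thesis
    using Der_P11_form[OF assms] Der_P12_form[OF assms] Der_P13_form[OF assms] Der_P14_form[OF assms]
      Der_P15_form[OF assms] dims card_param_set[OF assms] by simp
qed

end
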